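(* Let $\mathbb{T}=\mathbb{R}/\mathbb{Z}$ and let $u:\mathbb{T}\times[0,T]\to\mathbb{R}$ be smooth with $u_{xx}\in C(\mathbb{T}\times[0,T])$. Then there exists $C>0$ such that, when $\Delta t$ is sufficiently small, for all $n\in\{0,\dots,N-1\}$, $$\frac12\le\frac{1}{1+C\Delta t_n}\le|X^n|_{W^{1,\infty}(\mathbb{T})}\le1+C\Delta t_n\le\frac32,\qquad |X^n|_{W^{2,\infty}(\mathbb{T})}\le C\Delta t_n.$$
   Context: Temporal mesh $0=t^0<\dots<t^N=T$, $\Delta t_n=t^{n+1}-t^n$, $\Delta t=\max_n\Delta t_n$. $X^n(x)=x-\Delta t_n(\tfrac16k_1^n+\tfrac46k_2^n+\tfrac16k_3^n)(x)$ with $k_1^n(x)=u(x,t^{n+1})$, $k_2^n(x)=u(x-\tfrac{\Delta t_n}{2}k_1^n(x),t^{n+1}-\tfrac{\Delta t_n}{2})$, $k_3^n(x)=u(x-\Delta t_n(-k_1^n(x)+2k_2^n(x)),t^{n+1}-\Delta t_n)$. Seminorms: $|f|_{W^{m,\infty}(\mathbb{T})}=\|D^mf\|_{L^\infty(\mathbb{T})}$, $D=d/dx$. *)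

theory Defs
  imports "HOL-Analysis.Analysis"
begin

text \<open>Functions on the torus T = R/Z are represented by 1-periodic functions on R.
  A space-time function u is a curried function u x t, with t ranging over [0,T].\<close>

definition pdx :: "(real \<Rightarrow> real \<Rightarrow> real) \<Rightarrow> real \<Rightarrow> real \<Rightarrow> real" where
  "pdx f x t = deriv (\<lambda>y. f y t) x"

definition pdt :: "real \<Rightarrow> (real \<Rightarrow> real \<Rightarrow> real) \<Rightarrow> real \<Rightarrow> real \<Rightarrow> real" where
  "pdt T f x t = vector_derivative (\<lambda>s. f x s) (at t within {0..T})"

fun pd_iter :: "real \<Rightarrow> bool list \<Rightarrow> (real \<Rightarrow> real \<Rightarrow> real) \<Rightarrow> real \<Rightarrow> real \<Rightarrow> real" where
  "pd_iter T [] f = f"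
| "pd_iter T (d # ds) f = (if d then pdx (pd_iter T ds f) else pdt T (pd_iter T ds f))"

definition smooth_strip :: "real \<Rightarrow> (real \<Rightarrow> real \<Rightarrow> real) \<Rightarrow> bool" where
  "smooth_strip T u \<longleftrightarrow>
     (\<forall>ds. continuous_on (UNIV \<times> {0..T}) (\<lambda>p. pd_iter T ds u (fst p) (snd p)) \<and>
        (\<forall>x. \<forall>s\<in>{0..T}.
           ((\<lambda>y. pd_iter T ds u y s) has_real_derivative pdx (pd_iter T ds u) x s) (at x) \<and>
           ((\<lambda>r. pd_iter T ds u x r) has_real_derivative pdt T (pd_iter T ds u) x s)
              (at s within {0..T})))"

text \<open>The RK3 backward characteristic map X^n, with tn1 = t^{n+1}, dt = Delta t_n.\<close>
definition rk_map :: "(real \<Rightarrow> real \<Rightarrow> real) \<Rightarrow> real \<Rightarrow> real \<Rightarrow> real \<Rightarrow> real" where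
  "rk_map u tn1 dt x =
     (let k1 = u x tn1;
          k2 = u (x - dt / 2 * k1) (tn1 - dt / 2);
          k3 = u (x - dt * (- k1 + 2 * k2)) (tn1 - dt)
      in x - dt * (k1 / 6 + 4 / 6 * k2 + k3 / 6))"

text \<open>Seminorm |f|_{W^{m,infinity}} = sup |D^m f| (sup over a period = sup over R
  for the periodic functions considered).\<close>
definition W_semi :: "nat \<Rightarrow> (real \<Rightarrow> real) \<Rightarrow> real" where
  "W_semi m f = (SUP x. \<bar>(deriv ^^ m) f x\<bar>)"

definition mesh_max :: "(nat \<Rightarrow> real) \<Rightarrow> nat \<Rightarrow> real" where
  "mesh_max tt N = Max ((\<lambda>n. tt (Suc n) - tt n) ` {..<N})"

end

theory Submission
  imports Defs "HOL-Library.Periodic_Fun"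
begin

(* X^n = id - dt * S with S = (k1 + 4 k2 + k3) / 6.  Every stage k_i is u(., s) composed with a
  map of the form x - c g(x), |c| <= 1, and such compositions keep their first two derivatives
  bounded by a polynomial in a common bound K of u_x and u_xx on the strip (finite by
  continuity and periodicity).  So |S'|, |S''| <= M independently of n, whence
  |(X^n)' - 1| <= M dt and |(X^n)''| <= M dt; with C = 2 M + 1 and C dt <= 1/2 this gives all
  the stated inequalities. *)

lemma periodic_strip_bounded:
  fixes f :: "real \<Rightarrow> real \<Rightarrow> real"
  assumes cont: "continuous_on (UNIV \<times> {0..T}) (\<lambda>p. f (fst p) (snd p))"
    and per: "\<forall>y. \<forall>s\<in>{0..T}. f (y + 1) s = f y s"
  shows "\<exists>B. \<forall>y. \<forall>s\<in>{0..T}. \<bar>f y s\<bar> \<le> B"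
proof -
  have "compact ((\<lambda>p. f (fst p) (snd p)) ` ({0..1} \<times> {0..T}))"
    by (intro compact_continuous_image compact_Times continuous_on_subset[OF cont]) auto
  then obtain B where B: "\<forall>z\<in>(\<lambda>p. f (fst p) (snd p)) ` ({0..1} \<times> {0..T}). \<bar>z\<bar> \<le> B"
    using compact_imp_bounded bounded_real by blast
  have "\<bar>f y s\<bar> \<le> B" if s: "s \<in> {0..T}" for y s
  proof -
    interpret periodic_fun_simple' "\<lambda>y. f y s"
      by standard (use per s in blast)
    have "f y s = f (frac y) s"
      using plus_of_int[of "frac y" "\<lfloor>y\<rfloor>"] by (simp add: frac_def)
    moreover have "frac y \<in> {0..1}"
      using frac_ge_0[of y] frac_lt_1[of y] by simp
    ultimately show ?thesis
      using B s by force
  qed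
  then show ?thesis by blast
qed

lemma DERIV_periodic:
  fixes f f' :: "real \<Rightarrow> real"
  assumes deriv: "\<And>y. (f has_real_derivative f' y) (at y)"
    and per: "\<And>y. f (y + 1) = f y"
  shows "f' (x + 1) = f' x"
proof -
  have "((\<lambda>y. f (y + 1)) has_real_derivative f' (x + 1)) (at x)"
    using deriv[of "x + 1"] by (simp add: DERIV_shift)
  then have "(f has_real_derivative f' (x + 1)) (at x)"
    by (simp add: per)
  then show ?thesis
    using deriv DERIV_unique by blast
qed

definition C2_bounded :: "(real \<Rightarrow> real) \<Rightarrow> real \<Rightarrow> bool" where
  "C2_bounded f M \<longleftrightarrow> (\<exists>f' f''. \<forall>x.
     (f has_real_derivative f' x) (at x) \<and> (f' has_real_derivative f'' x) (at x) \<and>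
     \<bar>f' x\<bar> \<le> M \<and> \<bar>f'' x\<bar> \<le> M)"

lemma C2_boundedI:
  assumes "\<And>x. (f has_real_derivative f' x) (at x)" "\<And>x. (f' has_real_derivative f'' x) (at x)"
    and "\<And>x. \<bar>f' x\<bar> \<le> M" "\<And>x. \<bar>f'' x\<bar> \<le> M"
  shows "C2_bounded f M"
  unfolding C2_bounded_def using assms by blast

lemma C2_boundedE:
  assumes "C2_bounded f M"
  obtains f' f'' where "\<And>x. (f has_real_derivative f' x) (at x)"
    "\<And>x. (f' has_real_derivative f'' x) (at x)" "\<And>x. \<bar>f' x\<bar> \<le> M" "\<And>x. \<bar>f'' x\<bar> \<le> M"
  using assms unfolding C2_bounded_def by blast

lemma C2_bounded_nonneg: "C2_bounded f M \<Longrightarrow> 0 \<le> M"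
  by (erule C2_boundedE) (use abs_ge_zero order_trans in blast)

lemma C2_bounded_add:
  assumes "C2_bounded f A" "C2_bounded g B"
  shows "C2_bounded (\<lambda>x. f x + g x) (A + B)"
proof -
  obtain f' f'' where f: "\<And>x. (f has_real_derivative f' x) (at x)"
    "\<And>x. (f' has_real_derivative f'' x) (at x)" "\<And>x. \<bar>f' x\<bar> \<le> A" "\<And>x. \<bar>f'' x\<bar> \<le> A"
    using assms(1) by (erule C2_boundedE)
  obtain g' g'' where g: "\<And>x. (g has_real_derivative g' x) (at x)"
    "\<And>x. (g' has_real_derivative g'' x) (at x)" "\<And>x. \<bar>g' x\<bar> \<le> B" "\<And>x. \<bar>g'' x\<bar> \<le> B"
    using assms(2) by (erule C2_boundedE)
  show ?thesis
  proof (rule C2_boundedI[where f' = "\<lambda>x. f' x + g' x" and f'' = "\<lambda>x. f'' x + g'' x"])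
    show "\<bar>f' x + g' x\<bar> \<le> A + B" "\<bar>f'' x + g'' x\<bar> \<le> A + B" for x
      using f(3,4)[of x] g(3,4)[of x] by linarith+
  qed (use f g in \<open>auto intro!: derivative_eq_intros\<close>)
qed

lemma C2_bounded_cmult:
  assumes "C2_bounded f A"
  shows "C2_bounded (\<lambda>x. c * f x) (\<bar>c\<bar> * A)"
proof -
  obtain f' f'' where f: "\<And>x. (f has_real_derivative f' x) (at x)"
    "\<And>x. (f' has_real_derivative f'' x) (at x)" "\<And>x. \<bar>f' x\<bar> \<le> A" "\<And>x. \<bar>f'' x\<bar> \<le> A"
    using assms by (erule C2_boundedE)
  show ?thesis
    by (rule C2_boundedI[where f' = "\<lambda>x. c * f' x" and f'' = "\<lambda>x. c * f'' x"])
      (use f in \<open>auto intro!: derivative_eq_intros mult_left_mono simp: abs_mult\<close>)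
qed

lemma C2_bounded_perturbed_id:
  assumes "C2_bounded g B" "\<bar>c\<bar> \<le> 1"
  shows "C2_bounded (\<lambda>x. x - c * g x) (1 + B)"
proof -
  obtain g' g'' where g: "\<And>x. (g has_real_derivative g' x) (at x)"
    "\<And>x. (g' has_real_derivative g'' x) (at x)" "\<And>x. \<bar>g' x\<bar> \<le> B" "\<And>x. \<bar>g'' x\<bar> \<le> B"
    using assms(1) by (erule C2_boundedE)
  have cg: "\<bar>c * g' x\<bar> \<le> B" "\<bar>c * g'' x\<bar> \<le> B" for x
    using mult_mono[OF assms(2) g(3)] mult_mono[OF assms(2) g(4)] by (simp_all add: abs_mult)
  show ?thesis
  proof (rule C2_boundedI[where f' = "\<lambda>x. 1 - c * g' x" and f'' = "\<lambda>x. - c * g'' x"])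
    show "\<bar>1 - c * g' x\<bar> \<le> 1 + B" "\<bar>- c * g'' x\<bar> \<le> 1 + B" for x
      using cg[of x] by auto
  qed (use g in \<open>auto intro!: derivative_eq_intros\<close>)
qed

lemma C2_bounded_compose:
  assumes "C2_bounded f A" "C2_bounded g B"
  shows "C2_bounded (\<lambda>x. f (g x)) (A * B * (B + 1))"
proof -
  obtain f' f'' where f: "\<And>x. (f has_real_derivative f' x) (at x)"
    "\<And>x. (f' has_real_derivative f'' x) (at x)" "\<And>x. \<bar>f' x\<bar> \<le> A" "\<And>x. \<bar>f'' x\<bar> \<le> A"
    using assms(1) by (erule C2_boundedE)
  obtain g' g'' where g: "\<And>x. (g has_real_derivative g' x) (at x)"
    "\<And>x. (g' has_real_derivative g'' x) (at x)" "\<And>x. \<bar>g' x\<bar> \<le> B" "\<And>x. \<bar>g'' x\<bar> \<le> B"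
    using assms(2) by (erule C2_boundedE)
  have A: "0 \<le> A" and B: "0 \<le> B"
    using assms by (simp_all add: C2_bounded_nonneg)
  have chain: "((\<lambda>x. f (g x)) has_real_derivative f' (g x) * g' x) (at x)" for x
    using DERIV_chain2[OF f(1) g(1)] .
  have chain': "((\<lambda>x. f' (g x) * g' x) has_real_derivative
      f'' (g x) * (g' x * g' x) + f' (g x) * g'' x) (at x)" for x
    using DERIV_mult[OF DERIV_chain2[OF f(2) g(1)] g(2)]
    by (rule DERIV_cong) (simp add: algebra_simps)
  have g'2: "\<bar>g' x * g' x\<bar> \<le> B * B" for x
    using mult_mono[OF g(3)[of x] g(3)[of x]] by (simp add: abs_mult B)
  have first: "\<bar>f' (g x) * g' x\<bar> \<le> A * B" for x
    using mult_mono[OF f(3)[of "g x"] g(3)[of x]] by (simp add: abs_mult A)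
  have terms: "\<bar>f'' (g x) * (g' x * g' x)\<bar> \<le> A * (B * B)" "\<bar>f' (g x) * g'' x\<bar> \<le> A * B" for x
    using mult_mono[OF f(4)[of "g x"] g'2[of x]] mult_mono[OF f(3)[of "g x"] g(4)[of x]]
    by (simp_all add: abs_mult A)
  have "A * (B * B) + A * B = A * B * (B + 1)"
    by (simp add: algebra_simps)
  then have second: "\<bar>f'' (g x) * (g' x * g' x) + f' (g x) * g'' x\<bar> \<le> A * B * (B + 1)" for x
    using abs_triangle_ineq[of "f'' (g x) * (g' x * g' x)" "f' (g x) * g'' x"] terms[of x] by linarith
  have "A * B \<le> A * B * (B + 1)"
    using mult_left_mono[of 1 "B + 1" "A * B"] A B by simp
  then show ?thesis
    using first second by (intro C2_boundedI[OF chain chain']) (auto intro: order_trans)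
qed

definition rk_slope :: "(real \<Rightarrow> real \<Rightarrow> real) \<Rightarrow> real \<Rightarrow> real \<Rightarrow> real \<Rightarrow> real" where
  "rk_slope u tn1 dt x =
     (let k1 = u x tn1;
          k2 = u (x - dt / 2 * k1) (tn1 - dt / 2);
          k3 = u (x - dt * (- k1 + 2 * k2)) (tn1 - dt)
      in (k1 + 4 * k2 + k3) / 6)"

lemma rk_map_eq_slope: "rk_map u tn1 dt = (\<lambda>x. x - dt * rk_slope u tn1 dt x)"
  by (simp add: fun_eq_iff rk_map_def rk_slope_def Let_def)

lemma C2_bounded_rk_slope:
  assumes u: "\<And>s. s \<in> {0..T} \<Longrightarrow> C2_bounded (\<lambda>x. u x s) K"
  obtains M where "\<And>t dt. 0 \<le> dt \<Longrightarrow> dt \<le> 1 \<Longrightarrow> 0 \<le> t - dt \<Longrightarrow> t \<le> T \<Longrightarrow>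
    C2_bounded (rk_slope u t dt) M"
proof -
  define B2 where "B2 = 1 + K"
  define A2 where "A2 = K * B2 * (B2 + 1)"
  define B3 where "B3 = 1 + (K + 2 * A2)"
  define A3 where "A3 = K * B3 * (B3 + 1)"
  have "C2_bounded (rk_slope u t dt) ((K + 4 * A2 + A3) / 6)"
    if dt: "0 \<le> dt" "dt \<le> 1" and t: "0 \<le> t - dt" "t \<le> T" for t dt
  proof -
    have times: "t \<in> {0..T}" "t - dt / 2 \<in> {0..T}" "t - dt \<in> {0..T}"
      using dt t by auto
    define k1 where "k1 = (\<lambda>x. u x t)"
    define k2 where "k2 = (\<lambda>x. u (x - dt / 2 * k1 x) (t - dt / 2))"
    define k3 where "k3 = (\<lambda>x. u (x - dt * (- k1 x + 2 * k2 x)) (t - dt))"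
    have k1: "C2_bounded k1 K"
      unfolding k1_def using u[OF times(1)] .
    have k2: "C2_bounded k2 A2"
      unfolding k2_def A2_def B2_def
      using C2_bounded_compose[OF u[OF times(2)] C2_bounded_perturbed_id[OF k1, of "dt / 2"]] dt by simp
    have g3: "C2_bounded (\<lambda>x. - k1 x + 2 * k2 x) (K + 2 * A2)"
      using C2_bounded_add[OF C2_bounded_cmult[OF k1, of "- 1"] C2_bounded_cmult[OF k2, of 2]] by simp
    have k3: "C2_bounded k3 A3"
      unfolding k3_def A3_def B3_def
      using C2_bounded_compose[OF u[OF times(3)] C2_bounded_perturbed_id[OF g3, of dt]] dt by simp
    have "rk_slope u t dt = (\<lambda>x. 1 / 6 * (k1 x + 4 * k2 x + k3 x))"
      by (simp add: fun_eq_iff rk_slope_def Let_def k1_def k2_def k3_def)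
    then show ?thesis
      using C2_bounded_cmult[OF C2_bounded_add[OF C2_bounded_add[OF k1 C2_bounded_cmult[OF k2, of 4]] k3],
          of "1 / 6"]
      by simp
  qed
  then show thesis
    using that by blast
qed

lemma W_semi_perturbed_id:
  assumes g: "C2_bounded g M" and c: "0 \<le> c"
  shows "1 - c * M \<le> W_semi 1 (\<lambda>x. x - c * g x)"
    and "W_semi 1 (\<lambda>x. x - c * g x) \<le> 1 + c * M"
    and "W_semi 2 (\<lambda>x. x - c * g x) \<le> c * M"
proof -
  obtain g' g'' where g': "\<And>x. (g has_real_derivative g' x) (at x)"
    "\<And>x. (g' has_real_derivative g'' x) (at x)" "\<And>x. \<bar>g' x\<bar> \<le> M" "\<And>x. \<bar>g'' x\<bar> \<le> M"
    using g by (erule C2_boundedE)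
  have "deriv (\<lambda>x. x - c * g x) = (\<lambda>x. 1 - c * g' x)"
    by (rule ext, rule DERIV_imp_deriv) (use g' in \<open>auto intro!: derivative_eq_intros\<close>)
  moreover have "deriv (\<lambda>x. 1 - c * g' x) = (\<lambda>x. - c * g'' x)"
    by (rule ext, rule DERIV_imp_deriv) (use g' in \<open>auto intro!: derivative_eq_intros\<close>)
  ultimately have W1: "W_semi 1 (\<lambda>x. x - c * g x) = (SUP x. \<bar>1 - c * g' x\<bar>)"
    and W2: "W_semi 2 (\<lambda>x. x - c * g x) = (SUP x. \<bar>c * g'' x\<bar>)"
    by (simp_all add: W_semi_def numeral_2_eq_2)
  have cg: "\<bar>c * g' x\<bar> \<le> c * M" "\<bar>c * g'' x\<bar> \<le> c * M" for x
    using mult_left_mono[OF g'(3) c] mult_left_mono[OF g'(4) c] c by (simp_all add: abs_mult)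
  have upper: "\<bar>1 - c * g' x\<bar> \<le> 1 + c * M" for x
    using abs_triangle_ineq4[of 1 "c * g' x"] cg(1)[of x] by simp
  have "1 - c * M \<le> \<bar>1 - c * g' 0\<bar>"
    using abs_le_D1[OF cg(1)[of 0]] abs_ge_self[of "1 - c * g' 0"] by linarith
  also have "\<dots> \<le> (SUP x. \<bar>1 - c * g' x\<bar>)"
    by (rule cSUP_upper) (use upper in \<open>auto intro: bdd_aboveI2[where M = "1 + c * M"]\<close>)
  finally show "1 - c * M \<le> W_semi 1 (\<lambda>x. x - c * g x)"
    unfolding W1 .
  show "W_semi 1 (\<lambda>x. x - c * g x) \<le> 1 + c * M"
    unfolding W1 by (rule cSUP_least) (use upper in auto)
  show "W_semi 2 (\<lambda>x. x - c * g x) \<le> c * M"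
    unfolding W2 by (rule cSUP_least) (use cg in auto)
qed

lemma inverse_one_plus_le_one_minus:
  fixes h M C :: real
  assumes "0 \<le> h" "0 \<le> M" "2 * M \<le> C" "C * h \<le> 1 / 2"
  shows "1 / (1 + C * h) \<le> 1 - h * M"
proof -
  have hM: "0 \<le> h * M"
    using assms by simp
  have "h * M * (C * h) \<le> h * M * (1 / 2)"
    using assms hM by (intro mult_left_mono) auto
  moreover have "2 * (h * M) \<le> C * h"
    using mult_right_mono[OF assms(3,1)] by (simp add: algebra_simps)
  moreover have "(1 - h * M) * (1 + C * h) = 1 + C * h - h * M - h * M * (C * h)"
    by (simp add: algebra_simps)
  ultimately have "1 \<le> (1 - h * M) * (1 + C * h)"
    using hM by linarith
  moreover have "0 < 1 + C * h"
    using assms by (simp add: add_pos_nonneg)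
  ultimately show ?thesis
    by (simp add: divide_le_eq mult.commute)
qed

lemma rk_map_W_semi_estimates:
  assumes slope: "C2_bounded (rk_slope u t dt) M"
    and dt: "0 \<le> dt" and C: "2 * M \<le> C" "C * dt \<le> 1 / 2"
  shows "1 / 2 \<le> 1 / (1 + C * dt) \<and> 1 / (1 + C * dt) \<le> W_semi 1 (rk_map u t dt) \<and>
    W_semi 1 (rk_map u t dt) \<le> 1 + C * dt \<and> 1 + C * dt \<le> 3 / 2 \<and>
    W_semi 2 (rk_map u t dt) \<le> C * dt"
proof -
  have M: "0 \<le> M"
    using slope by (rule C2_bounded_nonneg)
  have "dt * M \<le> C * dt"
    using mult_left_mono[of M C dt] C(1) M dt by (simp add: mult.commute)
  moreover have "0 \<le> C * dt"
    using C(1) M dt by simp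
  moreover have "1 / 2 \<le> 1 / (1 + C * dt)"
    using C(2) \<open>0 \<le> C * dt\<close> by (simp add: field_simps)
  ultimately show ?thesis
    using W_semi_perturbed_id[OF slope dt] inverse_one_plus_le_one_minus[OF dt M C] C(2)
    unfolding rk_map_eq_slope by (simp add: mult.commute)
qed

lemma mesh_step_bounds:
  fixes tt :: "nat \<Rightarrow> real"
  assumes "tt 0 = 0" "tt N = T" and incr: "\<forall>n<N. tt n < tt (Suc n)" and "n < N"
  shows "0 \<le> tt n" "tt (Suc n) \<le> T" "0 < tt (Suc n) - tt n" "tt (Suc n) - tt n \<le> mesh_max tt N"
proof -
  have mono: "tt i \<le> tt j" if "i \<le> j" "j \<le> N" for i j
    using that by (induction j rule: dec_induct) (use incr in \<open>force simp: Suc_le_eq\<close>)+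
  show "0 \<le> tt n" "tt (Suc n) \<le> T" "0 < tt (Suc n) - tt n"
    using mono[of 0 n] mono[of "Suc n" N] incr assms by auto
  show "tt (Suc n) - tt n \<le> mesh_max tt N"
    unfolding mesh_max_def using \<open>n < N\<close> by (intro Max_ge) auto
qed

lemma smooth_periodic_C2_bounded:
  assumes per: "\<forall>x. \<forall>t\<in>{0..T}. u (x + 1) t = u x t"
    and smooth: "smooth_strip T u"
    and cont2: "continuous_on (UNIV \<times> {0..T}) (\<lambda>p. pdx (pdx u) (fst p) (snd p))"
  obtains K where "\<And>s. s \<in> {0..T} \<Longrightarrow> C2_bounded (\<lambda>x. u x s) K"
proof -
  have iter: "continuous_on (UNIV \<times> {0..T}) (\<lambda>p. pd_iter T ds u (fst p) (snd p)) \<and>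
      (\<forall>x. \<forall>s\<in>{0..T}. ((\<lambda>y. pd_iter T ds u y s) has_real_derivative pdx (pd_iter T ds u) x s) (at x))"
    for ds
    using smooth unfolding smooth_strip_def by blast
  have cont1: "continuous_on (UNIV \<times> {0..T}) (\<lambda>p. pdx u (fst p) (snd p))"
    and du: "\<And>x s. s \<in> {0..T} \<Longrightarrow> ((\<lambda>y. u y s) has_real_derivative pdx u x s) (at x)"
    and dux: "\<And>x s. s \<in> {0..T} \<Longrightarrow> ((\<lambda>y. pdx u y s) has_real_derivative pdx (pdx u) x s) (at x)"
    using iter[of "[]"] iter[of "[True]"] by auto
  have per1: "\<forall>y. \<forall>s\<in>{0..T}. pdx u (y + 1) s = pdx u y s"
    using DERIV_periodic[OF du] per by blast
  have per2: "\<forall>y. \<forall>s\<in>{0..T}. pdx (pdx u) (y + 1) s = pdx (pdx u) y s"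
    using DERIV_periodic[OF dux] per1 by blast
  obtain B1 where B1: "\<forall>y. \<forall>s\<in>{0..T}. \<bar>pdx u y s\<bar> \<le> B1"
    using periodic_strip_bounded[OF cont1 per1] by blast
  obtain B2 where B2: "\<forall>y. \<forall>s\<in>{0..T}. \<bar>pdx (pdx u) y s\<bar> \<le> B2"
    using periodic_strip_bounded[OF cont2 per2] by blast
  have "\<bar>pdx u x s\<bar> \<le> max B1 B2" "\<bar>pdx (pdx u) x s\<bar> \<le> max B1 B2" if "s \<in> {0..T}" for x s
    using B1 B2 that by (simp_all add: le_max_iff_disj)
  then have "C2_bounded (\<lambda>x. u x s) (max B1 B2)" if "s \<in> {0..T}" for s
    using that by (intro C2_boundedI[OF du dux])
  then show thesis
    by (rule that)
qed

theorem lemma8: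
  fixes u :: "real \<Rightarrow> real \<Rightarrow> real" and T :: real
  assumes "0 < T"
    and "\<forall>x. \<forall>t\<in>{0..T}. u (x + 1) t = u x t"
    and "smooth_strip T u"
    and "continuous_on (UNIV \<times> {0..T}) (\<lambda>p. pdx (pdx u) (fst p) (snd p))"
  shows "\<exists>C>0. \<exists>\<delta>>0. \<forall>(N::nat) (tt::nat \<Rightarrow> real).
           tt 0 = 0 \<and> tt N = T \<and> (\<forall>n<N. tt n < tt (Suc n)) \<and> mesh_max tt N < \<delta> \<longrightarrow>
           (\<forall>n<N. let dtn = tt (Suc n) - tt n; X = rk_map u (tt (Suc n)) dtn in
              1 / 2 \<le> 1 / (1 + C * dtn) \<and> 1 / (1 + C * dtn) \<le> W_semi 1 X \<and>
              W_semi 1 X \<le> 1 + C * dtn \<and> 1 + C * dtn \<le> 3 / 2 \<and>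
              W_semi 2 X \<le> C * dtn)"
proof -
  obtain K where "\<And>s. s \<in> {0..T} \<Longrightarrow> C2_bounded (\<lambda>x. u x s) K"
    using smooth_periodic_C2_bounded[OF assms(2-4)] by blast
  then obtain M where slope: "\<And>t dt. 0 \<le> dt \<Longrightarrow> dt \<le> 1 \<Longrightarrow> 0 \<le> t - dt \<Longrightarrow> t \<le> T \<Longrightarrow>
      C2_bounded (rk_slope u t dt) M"
    using C2_bounded_rk_slope by blast
  have "0 \<le> M"
    using C2_bounded_nonneg[OF slope[of 0 T]] assms(1) by simp
  define C where "C = 2 * M + 1"
  define \<delta> where "\<delta> = min 1 (1 / (2 * C))"
  have "0 < C" "0 < \<delta>"
    using \<open>0 \<le> M\<close> by (simp_all add: C_def \<delta>_def)
  moreover have "let dtn = tt (Suc n) - tt n; X = rk_map u (tt (Suc n)) dtn in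
      1 / 2 \<le> 1 / (1 + C * dtn) \<and> 1 / (1 + C * dtn) \<le> W_semi 1 X \<and>
      W_semi 1 X \<le> 1 + C * dtn \<and> 1 + C * dtn \<le> 3 / 2 \<and> W_semi 2 X \<le> C * dtn"
    if "tt 0 = 0" "tt N = T" "\<forall>n<N. tt n < tt (Suc n)" "mesh_max tt N < \<delta>" "n < N"
    for N n and tt :: "nat \<Rightarrow> real"
  proof -
    note step = mesh_step_bounds[OF that(1-3,5)]
    define dt where "dt = tt (Suc n) - tt n"
    have "dt < \<delta>"
      using step(4) that(4) by (simp add: dt_def)
    then have "dt \<le> 1" and "C * dt \<le> 1 / 2"
      using \<open>0 < C\<close> by (auto simp: \<delta>_def field_simps)
    moreover have "C2_bounded (rk_slope u (tt (Suc n)) dt) M"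
      using step \<open>dt \<le> 1\<close> by (intro slope) (auto simp: dt_def)
    ultimately show ?thesis
      unfolding Let_def dt_def[symmetric] using step(3)
      by (intro rk_map_W_semi_estimates) (auto simp: C_def dt_def)
  qed
  ultimately show ?thesis
    by blast
qed

end
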